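(* Let $\Omega\subset\mathbb{R}^2$ be a measurable set with $(x,y)\in\Omega\Rightarrow(-x,y)\in\Omega$, and let $w\ge0$ be a weight function on $\Omega$ with $w(x,y)=w(-x,y)$ and $\int_\Omega |x|^{m-l}|y|^l w(x,y)\,dx\,dy<\infty$ for all integers $m\ge l\ge 0$. Put $\Omega':=\{(y,x^2)\mid (x,y)\in\Omega\}$ and $v(x,y):=w(y^{1/2},x)$ for $(x,y)\in\Omega'$. Assume that the weight functions $y^{-1/2}v(x,y)$ and $y^{1/2}v(x,y)$ on $\Omega'$ also have all such moments finite. Let $p_{n,k}$ ($n\ge k\ge0$) be the monic dominance orthogonal polynomials on $\Omega$ with respect to $w$, and let $q_{n,k}$ and $r_{n,k}$ be the monic dominance orthogonal polynomials on $\Omega'$ with respect to $y^{-1/2}v(x,y)$ and $y^{1/2}v(x,y)$, respectively (assumed to exist and be unique, e.g. if the weights are positive on sets of positive measure where needed). Then for all integers $n\ge k\ge0$: $$q_{n,k}(y,x^2)=p_{n+k,n-k}(x,y),\qquad x\,r_{n,k}(y,x^2)=p_{n+k+1,n-k}(x,y).$$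
   Context: Monomials $x^{m-l}y^l$ are indexed by pairs $(m,l)$ of integers with $m\ge l\ge0$, with the dominance partial order $(m,l)\le(n,k)$ iff $m\le n$ and $m+l\le n+k$; $(m,l)<(n,k)$ means $(m,l)\le(n,k)$ and $(m,l)\ne(n,k)$. Given a region $D\subset\mathbb{R}^2$ and a weight $u$ on $D$ with all moments $\int_D|x|^{m-l}|y|^l u\,dx\,dy$ finite, the monic dominance orthogonal polynomials are polynomials $p_{n,k}(x,y)=\sum_{(m,l)\le(n,k)}c_{m,l}x^{m-l}y^l$ with $c_{n,k}=1$ such that $\int_D p_{n,k}(x,y)\,x^{m-l}y^l\,u(x,y)\,dx\,dy=0$ whenever $(m,l)<(n,k)$. *)

theory Defs
  imports "HOL-Analysis.Analysis"
begin

definition dom_le :: "nat \<times> nat \<Rightarrow> nat \<times> nat \<Rightarrow> bool" where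
  "dom_le a b \<longleftrightarrow> fst a \<le> fst b \<and> fst a + snd a \<le> fst b + snd b"

definition dom_below :: "nat \<Rightarrow> nat \<Rightarrow> (nat \<times> nat) set" where
  "dom_below n k = {(m, l). l \<le> m \<and> dom_le (m, l) (n, k)}"

definition monomial2 :: "nat \<times> nat \<Rightarrow> real \<times> real \<Rightarrow> real" where
  "monomial2 a z = fst z ^ (fst a - snd a) * snd z ^ snd a"

definition is_mdop :: "(real \<times> real) set \<Rightarrow> (real \<times> real \<Rightarrow> real) \<Rightarrow> nat \<Rightarrow> nat
    \<Rightarrow> (real \<times> real \<Rightarrow> real) \<Rightarrow> bool" where
  "is_mdop D u n k p \<longleftrightarrow>
     (\<exists>c :: nat \<times> nat \<Rightarrow> real. c (n, k) = 1 \<and>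
        (\<forall>z. p z = (\<Sum>a\<in>dom_below n k. c a * monomial2 a z))) \<and>
     (\<forall>a\<in>dom_below n k. a \<noteq> (n, k) \<longrightarrow>
        (LINT z : D | lebesgue. p z * monomial2 a z * u z) = 0)"

definition finite_moments :: "(real \<times> real) set \<Rightarrow> (real \<times> real \<Rightarrow> real) \<Rightarrow> bool" where
  "finite_moments D u \<longleftrightarrow>
     (\<forall>m l. l \<le> m \<longrightarrow>
        set_integrable lebesgue D (\<lambda>z. \<bar>fst z\<bar> ^ (m - l) * \<bar>snd z\<bar> ^ l * u z))"

end

theory Submission
  imports Defs
begin

text \<open>
  For e = 0, 1, substituting (x, y) to (y, x^2) and multiplying by x^e maps the monomials
  dominated by (n, k) bijectively onto those dominated by (n + k + e, n - k) whose x-degree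
  has the parity of e, and keeps the polynomial monic. So x^e q(y, x^2) is a monic candidate
  for p_{n+k+e, n-k}, and by uniqueness it only has to be orthogonal to the lower monomials.
  Against a monomial of the other parity the integrand is odd in x while the domain and the
  weight are even, so the integral vanishes. Against one of the same parity the integrand is
  even, and folding the domain by (x, y) to (y, x^2), whose Jacobian is 2|x|, turns the
  integral into an orthogonality integral of q_{n,k} (e = 0) or r_{n,k} (e = 1) against a
  monomial below (n, k).
\<close>

lemma set_lebesgue_integral_cong_pointwise:
  "(\<And>x. x \<in> A \<Longrightarrow> f x = g x) \<Longrightarrow> (LINT x:A|M. f x) = (LINT x:A|M. g x)"
  unfolding set_lebesgue_integral_def
  by (rule Bochner_Integration.integral_cong) (auto simp: indicator_def)

lemma set_integral_spike_negligible:
  fixes f :: "'a::euclidean_space \<Rightarrow> real"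
  assumes "negligible {x \<in> S - T. f x \<noteq> 0}" "negligible {x \<in> T - S. f x \<noteq> 0}"
  shows "(LINT x:S|lebesgue. f x) = (LINT x:T|lebesgue. f x)"
proof -
  have eq_or_0: "(LINT x:A|lebesgue. f x) = (if f absolutely_integrable_on A then integral A f else 0)"
    for A
    using set_lebesgue_integral_eq_integral(2)[of A f]
    by (auto simp: set_lebesgue_integral_def set_integrable_def not_integrable_integral_eq)
  show ?thesis
    unfolding eq_or_0 using absolutely_integrable_spike_set_eq[OF assms] integral_spike_set[OF assms]
    by simp
qed

lemma lebesgue_preserving_if_lborel_preserving:
  fixes f :: "'a::euclidean_space \<Rightarrow> 'b::euclidean_space"
  assumes f: "f \<in> borel_measurable borel" and distr_f: "distr lborel borel f = lborel"
  shows "f \<in> lebesgue \<rightarrow>\<^sub>M lebesgue" and "distr lebesgue lebesgue f = lebesgue"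
proof -
  have f': "f \<in> lborel \<rightarrow>\<^sub>M lborel" using f by simp
  have "distr lborel lborel f = lborel"
    using distr_f by (metis distr_cong sets_lborel)
  then have "distr lebesgue lborel f = lborel"
    using distr_completion[OF f'] by simp
  moreover have leb: "f \<in> lebesgue \<rightarrow>\<^sub>M lborel" by (rule measurable_completion[OF f'])
  ultimately show "f \<in> lebesgue \<rightarrow>\<^sub>M lebesgue" "distr lebesgue lebesgue f = lebesgue"
    using completion.measurable_completion2[OF leb] completion.completion_distr_eq[OF leb] by simp_all
qed

lemma
  fixes f :: "'a::euclidean_space \<Rightarrow> 'b::euclidean_space" and h :: "'b \<Rightarrow> real"
  assumes f: "f \<in> borel_measurable borel" and g: "g \<in> borel_measurable borel"
    and gf: "\<And>x. g (f x) = x" and fg: "\<And>y. f (g y) = y"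
    and distr_f: "distr lborel borel f = lborel"
  shows integrable_lebesgue_preserving_bij:
      "integrable lebesgue (\<lambda>x. h (f x)) \<longleftrightarrow> integrable lebesgue h"
    and integral_lebesgue_preserving_bij:
      "(\<integral>x. h (f x) \<partial>lebesgue) = (\<integral>y. h y \<partial>lebesgue)"
proof -
  have "distr lborel borel g = distr (distr lborel borel f) borel g"
    by (simp add: distr_f)
  also have "\<dots> = distr lborel borel (g \<circ> f)"
    using f g by (intro distr_distr) auto
  also have "\<dots> = lborel" by (simp add: o_def gf distr_id2 cong: distr_cong)
  finally have distr_g: "distr lborel borel g = lborel" .
  note f_leb = lebesgue_preserving_if_lborel_preserving[OF f distr_f]
  note g_leb = lebesgue_preserving_if_lborel_preserving(1)[OF g distr_g]
  have meas_iff: "(\<lambda>x. h (f x)) \<in> borel_measurable lebesgue \<longleftrightarrow> h \<in> borel_measurable lebesgue"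
  proof
    assume "(\<lambda>x. h (f x)) \<in> borel_measurable lebesgue"
    from measurable_comp[OF g_leb this] show "h \<in> borel_measurable lebesgue"
      by (simp add: o_def fg)
  qed (use measurable_comp[OF f_leb(1)] in \<open>simp add: o_def\<close>)
  show "integrable lebesgue (\<lambda>x. h (f x)) \<longleftrightarrow> integrable lebesgue h"
    using integrable_distr_eq[OF f_leb(1), of h] f_leb(2) meas_iff
    by (metis borel_measurable_integrable)
  show "(\<integral>x. h (f x) \<partial>lebesgue) = (\<integral>y. h y \<partial>lebesgue)"
  proof (cases "h \<in> borel_measurable lebesgue")
    case True
    then show ?thesis using integral_distr[OF f_leb(1) True] f_leb(2) by simp
  next
    case False
    then show ?thesis using meas_iff
      by (metis borel_measurable_integrable not_integrable_integral_eq)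
  qed
qed

lemma
  fixes f :: "'a::euclidean_space \<Rightarrow> 'b::euclidean_space" and h :: "'b \<Rightarrow> real"
  assumes "f \<in> borel_measurable borel" and "g \<in> borel_measurable borel"
    and "\<And>x. g (f x) = x" and "\<And>y. f (g y) = y"
    and "distr lborel borel f = lborel"
  shows set_integrable_lebesgue_preserving_bij:
      "set_integrable lebesgue (f -` T) (\<lambda>x. h (f x)) \<longleftrightarrow> set_integrable lebesgue T h"
    and set_integral_lebesgue_preserving_bij:
      "(LINT x:f -` T|lebesgue. h (f x)) = (LINT y:T|lebesgue. h y)"
  using integrable_lebesgue_preserving_bij[OF assms, of "\<lambda>y. indicator T y * h y"]
    integral_lebesgue_preserving_bij[OF assms, of "\<lambda>y. indicator T y * h y"]
  by (simp_all add: set_integrable_def set_lebesgue_integral_def indicator_vimage)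

section \<open>Symmetry in the first coordinate\<close>

lemma distr_apfst_uminus_lborel: "distr lborel borel (apfst uminus) = (lborel :: (real \<times> real) measure)"
proof -
  have "distr lborel borel (apfst uminus)
      = distr (lborel \<Otimes>\<^sub>M lborel) (borel \<Otimes>\<^sub>M borel) (\<lambda>(x, y :: real). (- x :: real, y))"
    by (simp add: lborel_prod borel_prod apfst_def map_prod_def)
  also have "\<dots> = distr lborel borel uminus \<Otimes>\<^sub>M distr lborel borel (\<lambda>y. y)"
    by (rule pair_measure_distr[symmetric]) (auto simp: distr_id2 lborel.sigma_finite_measure_axioms)
  also have "\<dots> = lborel"
    by (simp add: lborel_distr_uminus distr_id2 lborel_prod)
  finally show ?thesis .
qed

lemma borel_measurable_apfst_uminus:
  "(apfst uminus :: real \<times> real \<Rightarrow> real \<times> real) \<in> borel_measurable borel"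
proof (rule borel_measurable_continuous_onI)
  have "apfst uminus = (\<lambda>z :: real \<times> real. (- fst z, snd z))"
    by (simp add: fun_eq_iff)
  then show "continuous_on UNIV (apfst uminus :: real \<times> real \<Rightarrow> real \<times> real)"
    by (simp add: continuous_on_Pair continuous_on_minus continuous_on_fst continuous_on_snd continuous_on_id)
qed

lemma set_integrable_reflect_fst:
  fixes h :: "real \<times> real \<Rightarrow> real"
  shows "set_integrable lebesgue (apfst uminus -` T) (\<lambda>z. h (apfst uminus z)) \<longleftrightarrow>
    set_integrable lebesgue T h"
  by (rule set_integrable_lebesgue_preserving_bij[where g = "apfst uminus"])
    (simp_all add: borel_measurable_apfst_uminus distr_apfst_uminus_lborel apfst_compose)

lemma set_integral_reflect_fst:
  fixes h :: "real \<times> real \<Rightarrow> real"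
  shows "(LINT z:apfst uminus -` T|lebesgue. h (apfst uminus z)) = (LINT z:T|lebesgue. h z)"
  by (rule set_integral_lebesgue_preserving_bij[where g = "apfst uminus"])
    (simp_all add: borel_measurable_apfst_uminus distr_apfst_uminus_lborel apfst_compose)

lemma set_integral_odd_fst_eq_0:
  fixes S :: "(real \<times> real) set" and h :: "real \<times> real \<Rightarrow> real"
  assumes symm: "\<And>x y. (x, y) \<in> S \<Longrightarrow> (- x, y) \<in> S"
    and odd: "\<And>x y. (x, y) \<in> S \<Longrightarrow> h (- x, y) = - h (x, y)"
  shows "(LINT z:S|lebesgue. h z) = 0"
proof -
  have S: "apfst uminus -` S = S"
    using symm by (fastforce simp: apfst_def map_prod_def)
  have "(LINT z:S|lebesgue. h z) = (LINT z:S|lebesgue. h (apfst uminus z))"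
    using set_integral_reflect_fst[where h=h and T=S] by (simp add: S)
  also have "\<dots> = (LINT z:S|lebesgue. - h z)"
    by (rule set_lebesgue_integral_cong_pointwise) (auto simp: odd)
  also have "\<dots> = - (LINT z:S|lebesgue. h z)"
    using set_integral_mult_right[where a = "-1" and A = S and M = lebesgue and f = h] by simp
  finally show ?thesis by simp
qed

lemma sets_lebesgue_halfplane_fst: "{z :: real \<times> real. 0 < fst z} \<in> sets lebesgue"
proof -
  have "open {z :: real \<times> real. 0 < fst z}"
    by (intro open_Collect_less continuous_intros)
  then show ?thesis by auto
qed

lemma negligible_coordinate_lines:
  "negligible {z :: real \<times> real. fst z = 0}" "negligible {z :: real \<times> real. snd z = 0}"
proof -
  have "negligible {z :: real \<times> real. z \<bullet> (1, 0) = 0}" "negligible {z :: real \<times> real. z \<bullet> (0, 1) = 0}"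
    by (rule negligible_standard_hyperplane, simp add: Basis_prod_def)+
  then show "negligible {z :: real \<times> real. fst z = 0}" "negligible {z :: real \<times> real. snd z = 0}"
    by (simp_all add: inner_prod_def)
qed

lemma set_integral_even_fst:
  fixes S :: "(real \<times> real) set" and h :: "real \<times> real \<Rightarrow> real"
  assumes S: "S \<in> sets lebesgue"
    and symm: "\<And>x y. (x, y) \<in> S \<Longrightarrow> (- x, y) \<in> S"
    and even: "\<And>x y. (x, y) \<in> S \<Longrightarrow> h (- x, y) = h (x, y)"
  shows "(LINT z:S|lebesgue. h z) = 2 * (LINT z:S \<inter> {z. 0 < fst z}|lebesgue. h z)"
proof -
  define S\<^sub>p where "S\<^sub>p = S \<inter> {z. 0 < fst z}"
  define S\<^sub>n where "S\<^sub>n = S \<inter> {z. fst z < 0}"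
  have S\<^sub>p: "S\<^sub>p \<in> sets lebesgue"
    using S sets_lebesgue_halfplane_fst unfolding S\<^sub>p_def by blast
  have reflect: "apfst uminus -` S\<^sub>p = S\<^sub>n"
    using symm by (fastforce simp: S\<^sub>p_def S\<^sub>n_def apfst_def map_prod_def)
  have h_reflect: "h (apfst uminus z) = h z" if "z \<in> S\<^sub>n" for z
    using that even by (cases z) (auto simp: S\<^sub>n_def)
  have integrable_iff: "set_integrable lebesgue S\<^sub>n h \<longleftrightarrow> set_integrable lebesgue S\<^sub>p h"
  proof -
    have "set_integrable lebesgue S\<^sub>n (\<lambda>z. h (apfst uminus z)) \<longleftrightarrow> set_integrable lebesgue S\<^sub>n h"
      by (rule set_integrable_cong) (auto simp: h_reflect)
    then show ?thesis using set_integrable_reflect_fst[where h=h and T=S\<^sub>p] by (simp add: reflect)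
  qed
  have integral_eq: "(LINT z:S\<^sub>n|lebesgue. h z) = (LINT z:S\<^sub>p|lebesgue. h z)"
    using set_integral_reflect_fst[where h=h and T=S\<^sub>p]
      set_lebesgue_integral_cong_pointwise[of S\<^sub>n "\<lambda>z. h (apfst uminus z)" h] h_reflect
    by (simp add: reflect)
  show ?thesis
  proof (cases "set_integrable lebesgue S\<^sub>p h")
    case True
    have "(LINT z:S|lebesgue. h z) = (LINT z:S\<^sub>p \<union> S\<^sub>n|lebesgue. h z)"
      using negligible_coordinate_lines(1)
      by (intro set_integral_spike_negligible; rule negligible_subset)
        (auto simp: S\<^sub>p_def S\<^sub>n_def)
    also have "\<dots> = (LINT z:S\<^sub>p|lebesgue. h z) + (LINT z:S\<^sub>n|lebesgue. h z)"
      by (rule set_integral_Un) (use True integrable_iff in \<open>auto simp: S\<^sub>p_def S\<^sub>n_def\<close>)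
    finally show ?thesis by (simp add: integral_eq S\<^sub>p_def)
  next
    case False
    then have "\<not> set_integrable lebesgue S h"
      using set_integrable_subset[OF _ S\<^sub>p] by (auto simp: S\<^sub>p_def)
    with False show ?thesis
      by (simp add: S\<^sub>p_def set_lebesgue_integral_def set_integrable_def not_integrable_integral_eq)
  qed
qed

section \<open>The folding map (x, y) to (y, x^2)\<close>

text \<open>The change of variables theorem of the library is stated for \<open>real^'n\<close>, so we transport
  \<open>real \<times> real\<close> to \<open>real^2\<close>.\<close>

definition pair_of_vec :: "real^2 \<Rightarrow> real \<times> real" where
  "pair_of_vec u = (u$1, u$2)"

definition vec_of_pair :: "real \<times> real \<Rightarrow> real^2" where
  "vec_of_pair z = (\<chi> i. if i = 1 then fst z else snd z)"

lemma pair_of_vec_of_pair [simp]: "pair_of_vec (vec_of_pair z) = z"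
  by (simp add: pair_of_vec_def vec_of_pair_def)

lemma vec_of_pair_of_vec [simp]: "vec_of_pair (pair_of_vec u) = u"
  unfolding pair_of_vec_def vec_of_pair_def by (simp add: vec_eq_iff) (metis exhaust_2)

lemma borel_measurable_pair_of_vec: "pair_of_vec \<in> borel_measurable borel"
  unfolding pair_of_vec_def by (intro borel_measurable_continuous_onI continuous_intros)

lemma borel_measurable_vec_of_pair: "vec_of_pair \<in> borel_measurable borel"
proof -
  have "linear vec_of_pair"
    unfolding vec_of_pair_def by (intro linearI) (auto simp: vec_eq_iff)
  then show ?thesis
    by (intro borel_measurable_continuous_onI linear_continuous_on linear_conv_bounded_linear[THEN iffD1])
qed

lemma distr_pair_of_vec_lborel: "distr lborel borel pair_of_vec = lborel"
proof (rule lborel_eqI[symmetric])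
  fix l u :: "real \<times> real"
  assume "\<And>b. b \<in> Basis \<Longrightarrow> l \<bullet> b \<le> u \<bullet> b"
  from this[of "(1, 0)"] this[of "(0, 1)"] have le: "fst l \<le> fst u" "snd l \<le> snd u"
    by (auto simp: Basis_prod_def inner_prod_def)
  have box_pair: "box l u = {z. fst l < fst z \<and> fst z < fst u \<and> snd l < snd z \<and> snd z < snd u}"
    by (cases l; cases u) (auto simp: box_def Basis_prod_def)
  have box_vec: "pair_of_vec -` box l u = box (vec_of_pair l) (vec_of_pair u)"
    by (auto simp: box_pair mem_box_cart pair_of_vec_def vec_of_pair_def forall_2)
  have "emeasure (distr lborel borel pair_of_vec) (box l u) = emeasure lborel (box (vec_of_pair l) (vec_of_pair u))"
    by (simp add: emeasure_distr borel_measurable_pair_of_vec box_vec)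
  also have "\<dots> = (fst u - fst l) * (snd u - snd l)"
  proof -
    have basis: "(Basis :: (real^2) set) = {axis 1 1, axis 2 1}"
      by (auto simp: Basis_vec_def) (metis exhaust_2)
    show ?thesis
      using le by (subst emeasure_lborel_box)
        (auto simp: basis axis_eq_axis cart_eq_inner_axis[symmetric] vec_of_pair_def)
  qed
  also have "\<dots> = (\<Prod>b\<in>Basis. (u - l) \<bullet> b)"
    by (simp add: Basis_prod_def prod.union_disjoint inner_prod_def mult.commute)
  finally show "emeasure (distr lborel borel pair_of_vec) (box l u) = (\<Prod>b\<in>Basis. (u - l) \<bullet> b)" .
qed simp

lemma set_integral_pair_of_vec:
  fixes h :: "real \<times> real \<Rightarrow> real"
  shows "(LINT u:pair_of_vec -` T|lebesgue. h (pair_of_vec u)) = (LINT z:T|lebesgue. h z)"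
  by (rule set_integral_lebesgue_preserving_bij[where g = vec_of_pair])
    (simp_all add: borel_measurable_pair_of_vec borel_measurable_vec_of_pair distr_pair_of_vec_lborel)

lemma sets_lebesgue_vimage_pair_of_vec:
  assumes "S \<in> sets lebesgue"
  shows "pair_of_vec -` S \<in> sets lebesgue"
  using measurable_sets[OF lebesgue_preserving_if_lborel_preserving(1)
      [OF borel_measurable_pair_of_vec distr_pair_of_vec_lborel] assms]
  by simp

lemma has_absolute_integral_change_of_variables_real_valued:
  fixes f :: "real^'m::{finite,wellorder} \<Rightarrow> real" and g :: "real^'m::_ \<Rightarrow> real^'m::_"
  assumes "S \<in> sets lebesgue"
    and "\<And>x. x \<in> S \<Longrightarrow> (g has_derivative g' x) (at x within S)"
    and "inj_on g S"
  shows "(\<lambda>x. \<bar>det (matrix (g' x))\<bar> * f (g x)) absolutely_integrable_on S \<and>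
           integral S (\<lambda>x. \<bar>det (matrix (g' x))\<bar> * f (g x)) = b
     \<longleftrightarrow> f absolutely_integrable_on (g ` S) \<and> integral (g ` S) f = b"
proof -
  let ?F = "\<lambda>y. vec (f y) :: real^1"
  have vec_scaleR: "(\<lambda>x. \<bar>det (matrix (g' x))\<bar> *\<^sub>R ?F (g x))
      = (\<lambda>x. vec (\<bar>det (matrix (g' x))\<bar> * f (g x)))"
    by (auto simp: vec_eq_iff)
  have vec_integrable: "(\<lambda>x. vec (h x) :: real^1) absolutely_integrable_on T \<longleftrightarrow> h absolutely_integrable_on T"
    for h :: "real^'m::_ \<Rightarrow> real" and T
    by (simp add: absolutely_integrable_on_1_iff)
  have vec_integral: "integral T (\<lambda>x. vec (h x) :: real^1) = vec (integral T h)"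
    for h :: "real^'m::_ \<Rightarrow> real" and T
    by (simp add: integral_on_1_eq)
  have vec_eq: "(vec a = (vec c :: real^1)) = (a = c)" for a c :: real
    by (simp add: vec_eq_iff)
  show ?thesis
    using has_absolute_integral_change_of_variables[OF assms, of ?F "vec b"]
    unfolding vec_scaleR vec_integrable vec_integral vec_eq .
qed

lemma set_integral_change_of_variables:
  fixes f :: "real^'m::{finite,wellorder} \<Rightarrow> real" and g :: "real^'m::_ \<Rightarrow> real^'m::_"
  assumes "S \<in> sets lebesgue"
    and "\<And>x. x \<in> S \<Longrightarrow> (g has_derivative g' x) (at x within S)"
    and "inj_on g S"
  shows "(LINT x:S|lebesgue. \<bar>det (matrix (g' x))\<bar> * f (g x)) = (LINT y:g ` S|lebesgue. f y)"
proof (cases "f absolutely_integrable_on (g ` S)")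
  case True
  then show ?thesis
    using has_absolute_integral_change_of_variables_real_valued[OF assms, of f "integral (g ` S) f"]
    by (simp add: set_lebesgue_integral_eq_integral)
next
  case False
  then have "\<not> (\<lambda>x. \<bar>det (matrix (g' x))\<bar> * f (g x)) absolutely_integrable_on S"
    using has_absolute_integral_change_of_variables_real_valued[OF assms, of f] by blast
  with False show ?thesis
    by (simp add: set_lebesgue_integral_def set_integrable_def not_integrable_integral_eq)
qed

definition square_vec :: "real^2 \<Rightarrow> real^2" where
  "square_vec u = (\<chi> i. if i = 1 then u$2 else (u$1)^2)"

definition square_vec_deriv :: "real^2 \<Rightarrow> real^2 \<Rightarrow> real^2" where
  "square_vec_deriv u h = (\<chi> i. if i = 1 then h$2 else 2 * u$1 * h$1)"

lemma square_vec_has_derivative: "(square_vec has_derivative square_vec_deriv u) (at u within S)"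
proof -
  have square: "square_vec = (\<lambda>u. (u$2) *\<^sub>R axis 1 1 + (u$1 * u$1) *\<^sub>R axis 2 1)"
    by (auto simp: square_vec_def vec_eq_iff axis_def forall_2 power2_eq_square)
  have deriv: "square_vec_deriv u = (\<lambda>h. (h$2) *\<^sub>R axis 1 1 + (u$1 * h$1 + h$1 * u$1) *\<^sub>R axis 2 1)"
    by (auto simp: square_vec_deriv_def vec_eq_iff axis_def forall_2)
  show ?thesis
    unfolding square deriv by (intro has_derivative_add has_derivative_scaleR_left has_derivative_mult
        bounded_linear_imp_has_derivative bounded_linear_vec_nth)
qed

lemma abs_det_square_vec_deriv: "\<bar>det (matrix (square_vec_deriv u))\<bar> = 2 * \<bar>u$1\<bar>"
  unfolding det_2 by (simp add: matrix_def square_vec_deriv_def axis_def)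

lemma inj_on_square_vec: "inj_on square_vec {u. 0 < u$1}"
proof (rule inj_onI)
  fix u v assume "u \<in> {u. 0 < u$1}" "v \<in> {u. 0 < u$1}" "square_vec u = square_vec v"
  then have "u$2 = v$2" "(u$1)^2 = (v$1)^2" "0 < u$1" "0 < v$1"
    by (auto simp: square_vec_def vec_eq_iff forall_2)
  then show "u = v" by (simp add: vec_eq_iff forall_2 power2_eq_iff)
qed

lemma pair_of_square_vec: "pair_of_vec (square_vec u) = (snd (pair_of_vec u), fst (pair_of_vec u) ^ 2)"
  by (simp add: pair_of_vec_def square_vec_def)

lemma set_integral_square_fst:
  fixes S :: "(real \<times> real) set" and F :: "real \<times> real \<Rightarrow> real"
  assumes S: "S \<in> sets lebesgue" and pos: "S \<subseteq> {z. 0 < fst z}"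
  shows "(LINT z:S|lebesgue. 2 * fst z * F (snd z, fst z ^ 2))
       = (LINT u:(\<lambda>(x, y). (y, x ^ 2)) ` S|lebesgue. F u)"
proof -
  define A where "A = pair_of_vec -` S"
  have A: "A \<in> sets lebesgue" unfolding A_def by (rule sets_lebesgue_vimage_pair_of_vec[OF S])
  have A_pos: "A \<subseteq> {u. 0 < u$1}" using pos by (auto simp: A_def pair_of_vec_def)
  have image: "square_vec ` A = pair_of_vec -` (\<lambda>(x, y). (y, x ^ 2)) ` S"
  proof -
    have "square_vec ` A = vec_of_pair ` (\<lambda>(x, y). (y, x ^ 2)) ` pair_of_vec ` A"
      by (simp add: image_image pair_of_square_vec[symmetric] case_prod_beta)
    also have "pair_of_vec ` A = S"
      unfolding A_def by (rule surj_image_vimage_eq) (metis pair_of_vec_of_pair surjI)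
    also have "vec_of_pair ` T = pair_of_vec -` T" for T
      by (auto simp: image_iff) (metis vec_of_pair_of_vec)
    finally show ?thesis .
  qed
  have "(LINT z:S|lebesgue. 2 * fst z * F (snd z, fst z ^ 2))
      = (LINT u:A|lebesgue. \<bar>det (matrix (square_vec_deriv u))\<bar> * F (pair_of_vec (square_vec u)))"
    unfolding set_integral_pair_of_vec[symmetric] A_def[symmetric]
    using A_pos by (intro set_lebesgue_integral_cong_pointwise)
      (auto simp: abs_det_square_vec_deriv square_vec_def pair_of_vec_def)
  also have "\<dots> = (LINT v:square_vec ` A|lebesgue. F (pair_of_vec v))"
    by (rule set_integral_change_of_variables[OF A square_vec_has_derivative inj_on_subset[OF inj_on_square_vec A_pos]])
  also have "\<dots> = (LINT u:(\<lambda>(x, y). (y, x ^ 2)) ` S|lebesgue. F u)"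
    unfolding image by (rule set_integral_pair_of_vec)
  finally show ?thesis .
qed

lemma fold_square_image_diff_subset:
  fixes \<Omega> :: "(real \<times> real) set"
  assumes symm: "\<And>x y. (x, y) \<in> \<Omega> \<Longrightarrow> (- x, y) \<in> \<Omega>"
  shows "(\<lambda>(x, y). (y, x ^ 2)) ` \<Omega> - (\<lambda>(x, y). (y, x ^ 2)) ` (\<Omega> \<inter> {z. 0 < fst z})
    \<subseteq> {u. snd u = 0}"
proof
  fix u assume u: "u \<in> (\<lambda>(x, y). (y, x ^ 2)) ` \<Omega> - (\<lambda>(x, y). (y, x ^ 2)) ` (\<Omega> \<inter> {z. 0 < fst z})"
  then obtain x y where xy: "(x, y) \<in> \<Omega>" "u = (y, x ^ 2)" by auto
  have "x = 0"
  proof (rule ccontr)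
    assume "x \<noteq> 0"
    moreover have "(\<bar>x\<bar>, y) \<in> \<Omega>"
      using xy symm by (cases "0 < x") (simp_all add: abs_of_nonpos)
    ultimately have "(\<bar>x\<bar>, y) \<in> \<Omega> \<inter> {z. 0 < fst z}" by simp
    then have "u \<in> (\<lambda>(x, y). (y, x ^ 2)) ` (\<Omega> \<inter> {z. 0 < fst z})"
      using xy(2) by (intro image_eqI[of _ _ "(\<bar>x\<bar>, y)"]) simp_all
    with u show False by blast
  qed
  with xy show "u \<in> {u. snd u = 0}" by simp
qed

lemma set_integral_fold_square:
  fixes \<Omega> :: "(real \<times> real) set" and F w :: "real \<times> real \<Rightarrow> real"
  assumes meas: "\<Omega> \<in> sets lebesgue"
    and symm: "\<And>x y. (x, y) \<in> \<Omega> \<Longrightarrow> (- x, y) \<in> \<Omega>"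
    and w_even: "\<And>x y. (x, y) \<in> \<Omega> \<Longrightarrow> w (x, y) = w (- x, y)"
  shows "(LINT z:\<Omega>|lebesgue. F (snd z, fst z ^ 2) * w z)
       = (LINT u:(\<lambda>(x, y). (y, x ^ 2)) ` \<Omega>|lebesgue. F u * (w (sqrt (snd u), fst u) / sqrt (snd u)))"
proof -
  define \<Omega>\<^sub>p where "\<Omega>\<^sub>p = \<Omega> \<inter> {z. 0 < fst z}"
  define K where "K u = F u * (w (sqrt (snd u), fst u) / sqrt (snd u))" for u
  have "(LINT z:\<Omega>|lebesgue. F (snd z, fst z ^ 2) * w z)
      = 2 * (LINT z:\<Omega>\<^sub>p|lebesgue. F (snd z, fst z ^ 2) * w z)"
    unfolding \<Omega>\<^sub>p_def by (rule set_integral_even_fst[OF meas]) (simp_all add: symm w_even[symmetric])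
  also have "\<dots> = (LINT z:\<Omega>\<^sub>p|lebesgue. 2 * fst z * K (snd z, fst z ^ 2))"
    \<comment> \<open>on \<open>\<Omega>\<^sub>p\<close> we have \<open>sqrt (x\<^sup>2) = x > 0\<close>\<close>
    unfolding set_integral_mult_right[symmetric]
    by (rule set_lebesgue_integral_cong_pointwise) (auto simp: \<Omega>\<^sub>p_def K_def)
  also have "\<dots> = (LINT u:(\<lambda>(x, y). (y, x ^ 2)) ` \<Omega>\<^sub>p|lebesgue. K u)"
    by (rule set_integral_square_fst)
      (use meas sets_lebesgue_halfplane_fst in \<open>auto simp: \<Omega>\<^sub>p_def\<close>)
  also have "\<dots> = (LINT u:(\<lambda>(x, y). (y, x ^ 2)) ` \<Omega>|lebesgue. K u)"
  proof -
    have diff: "(\<lambda>(x, y). (y, x ^ 2)) ` \<Omega> - (\<lambda>(x, y). (y, x ^ 2)) ` \<Omega>\<^sub>p \<subseteq> {u. snd u = 0}"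
      unfolding \<Omega>\<^sub>p_def by (rule fold_square_image_diff_subset) (fact symm)
    show ?thesis
      by (intro set_integral_spike_negligible;
          rule negligible_subset[OF negligible_coordinate_lines(2)])
        (use diff in \<open>auto simp: \<Omega>\<^sub>p_def\<close>)
  qed
  finally show ?thesis by (simp add: K_def)
qed

section \<open>Transfer of dominance orthogonal polynomials\<close>

lemma monomial2_fold_square:
  assumes "l \<le> m"
  shows "monomial2 (m + l + e, m - l) z = fst z ^ e * monomial2 (m, l) (snd z, fst z ^ 2)"
proof -
  have "m + l + e - (m - l) = e + 2 * l" using assms by simp
  then show ?thesis by (simp add: monomial2_def power_add power_mult)
qed

lemma fold_square_mem_dom_below:
  assumes "(m, l) \<in> dom_below n k" and "k \<le> n"
  shows "(m + l + e, m - l) \<in> dom_below (n + k + e) (n - k)"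
  using assms by (auto simp: dom_below_def dom_le_def)

lemma dom_below_fold_square_even:
  assumes "(M, L) \<in> dom_below (n + k + e) (n - k)" and "even (M - L + e)" and "e \<le> 1" and "k \<le> n"
  obtains m l where "(m, l) \<in> dom_below n k" and "M = m + l + e" and "L = m - l"
proof -
  have LM: "L \<le> M" "M \<le> n + k + e" "M + L \<le> n + k + e + (n - k)"
    using assms(1) by (auto simp: dom_below_def dom_le_def)
  obtain J where "M - L + e = 2 * J" using assms(2) by (rule evenE)
  then have j: "M - L = 2 * (J - e) + e" using assms(3) by presburger
  show ?thesis
    by (rule that[of "L + (J - e)" "J - e"]) (use LM j assms(4) in \<open>auto simp: dom_below_def dom_le_def\<close>)
qed

lemma fold_square_monic_expansion:
  fixes Q :: "real \<times> real \<Rightarrow> real" and c :: "nat \<times> nat \<Rightarrow> real"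
  assumes nk: "k \<le> n" and c1: "c (n, k) = 1"
    and Q: "\<And>z. Q z = (\<Sum>a\<in>dom_below n k. c a * monomial2 a z)"
  shows "\<exists>c'. c' (n + k + e, n - k) = 1 \<and>
     (\<forall>z. fst z ^ e * Q (snd z, fst z ^ 2) = (\<Sum>b\<in>dom_below (n + k + e) (n - k). c' b * monomial2 b z))"
proof -
  define D where "D = dom_below n k"
  define \<psi> where "\<psi> = (\<lambda>(m :: nat, l :: nat). (m + l + e, m - l))"
  have inj: "inj_on \<psi> D"
    by (rule inj_onI) (auto simp: \<psi>_def D_def dom_below_def)
  have sub: "\<psi> ` D \<subseteq> dom_below (n + k + e) (n - k)"
    using fold_square_mem_dom_below[OF _ nk] by (auto simp: \<psi>_def D_def)
  define c' where "c' b = (if b \<in> \<psi> ` D then c (the_inv_into D \<psi> b) else 0)" for b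
  have c'_\<psi>: "c' (\<psi> a) = c a" if "a \<in> D" for a
    using that inj by (simp add: c'_def the_inv_into_f_f)
  have monomial_\<psi>: "monomial2 (\<psi> a) z = fst z ^ e * monomial2 a (snd z, fst z ^ 2)" if "a \<in> D" for a z
    using that by (cases a) (simp add: \<psi>_def D_def dom_below_def monomial2_fold_square)
  have finite: "finite (dom_below (n + k + e) (n - k))"
    by (rule finite_subset[of _ "{0..n + k + e} \<times> {0..n + k + e}"]) (auto simp: dom_below_def dom_le_def)
  show ?thesis
  proof (intro exI conjI allI)
    have "(n, k) \<in> D" by (simp add: D_def dom_below_def dom_le_def nk)
    then show "c' (n + k + e, n - k) = 1" using c'_\<psi> c1 by (fastforce simp: \<psi>_def)
    fix z :: "real \<times> real"
    have "(\<Sum>b\<in>dom_below (n + k + e) (n - k). c' b * monomial2 b z) = (\<Sum>b\<in>\<psi> ` D. c' b * monomial2 b z)"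
      by (rule sum.mono_neutral_cong_right[OF finite sub]) (auto simp: c'_def)
    also have "\<dots> = (\<Sum>a\<in>D. c' (\<psi> a) * monomial2 (\<psi> a) z)"
      by (rule sum.reindex[OF inj, unfolded o_def])
    also have "\<dots> = (\<Sum>a\<in>D. fst z ^ e * (c a * monomial2 a (snd z, fst z ^ 2)))"
      by (rule sum.cong) (auto simp: c'_\<psi> monomial_\<psi>)
    also have "\<dots> = fst z ^ e * Q (snd z, fst z ^ 2)"
      by (simp add: Q D_def sum_distrib_left)
    finally show "fst z ^ e * Q (snd z, fst z ^ 2)
        = (\<Sum>b\<in>dom_below (n + k + e) (n - k). c' b * monomial2 b z)" ..
  qed
qed

lemma set_integral_fold_square_monomial:
  fixes \<Omega> :: "(real \<times> real) set" and Q w :: "real \<times> real \<Rightarrow> real"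
  assumes meas: "\<Omega> \<in> sets lebesgue"
    and symm: "\<And>x y. (x, y) \<in> \<Omega> \<Longrightarrow> (- x, y) \<in> \<Omega>"
    and w_even: "\<And>x y. (x, y) \<in> \<Omega> \<Longrightarrow> w (x, y) = w (- x, y)"
    and "l \<le> m"
  shows "(LINT z:\<Omega>|lebesgue. fst z ^ e * Q (snd z, fst z ^ 2) * monomial2 (m + l + e, m - l) z * w z)
       = (LINT u:(\<lambda>(x, y). (y, x ^ 2)) ` \<Omega>|lebesgue.
            Q u * monomial2 (m, l) u * (snd u ^ e * (w (sqrt (snd u), fst u) / sqrt (snd u))))"
proof -
  have integrand: "fst z ^ e * Q (snd z, fst z ^ 2) * monomial2 (m + l + e, m - l) z * w z
      = (\<lambda>u. Q u * monomial2 (m, l) u * snd u ^ e) (snd z, fst z ^ 2) * w z" for z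
  proof -
    have "(fst z ^ 2) ^ e = fst z ^ e * fst z ^ e"
      by (simp add: power_mult[symmetric] mult_2 power_add)
    then show ?thesis by (simp add: monomial2_fold_square[OF \<open>l \<le> m\<close>] mult_ac)
  qed
  have "(LINT z:\<Omega>|lebesgue. fst z ^ e * Q (snd z, fst z ^ 2) * monomial2 (m + l + e, m - l) z * w z)
      = (LINT z:\<Omega>|lebesgue. (\<lambda>u. Q u * monomial2 (m, l) u * snd u ^ e) (snd z, fst z ^ 2) * w z)"
    by (simp only: integrand)
  also have "\<dots> = (LINT u:(\<lambda>(x, y). (y, x ^ 2)) ` \<Omega>|lebesgue.
      (\<lambda>u. Q u * monomial2 (m, l) u * snd u ^ e) u * (w (sqrt (snd u), fst u) / sqrt (snd u)))"
    by (rule set_integral_fold_square[OF meas symm w_even])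
  finally show ?thesis by (simp only: mult.assoc)
qed

lemma is_mdop_cong_weight:
  assumes "is_mdop D u n k p" and "\<And>z. z \<in> D \<Longrightarrow> u z = u' z"
  shows "is_mdop D u' n k p"
proof -
  have "(LINT z:D|lebesgue. p z * monomial2 a z * u z) = (LINT z:D|lebesgue. p z * monomial2 a z * u' z)"
    for a
    by (rule set_lebesgue_integral_cong_pointwise) (simp add: assms(2))
  with assms(1) show ?thesis by (simp add: is_mdop_def)
qed

lemma is_mdop_fold_square:
  fixes \<Omega> :: "(real \<times> real) set" and w Q :: "real \<times> real \<Rightarrow> real"
  assumes meas: "\<Omega> \<in> sets lebesgue"
    and symm: "\<And>x y. (x, y) \<in> \<Omega> \<Longrightarrow> (- x, y) \<in> \<Omega>"
    and w_even: "\<And>x y. (x, y) \<in> \<Omega> \<Longrightarrow> w (x, y) = w (- x, y)"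
    and nk: "k \<le> n" and e: "e \<le> 1"
    and Q: "is_mdop ((\<lambda>(x, y). (y, x ^ 2)) ` \<Omega>)
              (\<lambda>u. snd u ^ e * (w (sqrt (snd u), fst u) / sqrt (snd u))) n k Q"
  shows "is_mdop \<Omega> w (n + k + e) (n - k) (\<lambda>z. fst z ^ e * Q (snd z, fst z ^ 2))"
  unfolding is_mdop_def
proof (intro conjI ballI impI)
  show "\<exists>c. c (n + k + e, n - k) = 1 \<and> (\<forall>z. fst z ^ e * Q (snd z, fst z ^ 2)
      = (\<Sum>b\<in>dom_below (n + k + e) (n - k). c b * monomial2 b z))"
    using Q fold_square_monic_expansion[OF nk] unfolding is_mdop_def by blast
next
  fix b assume b: "b \<in> dom_below (n + k + e) (n - k)" and b_top: "b \<noteq> (n + k + e, n - k)"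
  obtain M L where b_ML: "b = (M, L)" by (cases b)
  show "(LINT z:\<Omega>|lebesgue. fst z ^ e * Q (snd z, fst z ^ 2) * monomial2 b z * w z) = 0"
  proof (cases "even (M - L + e)")
    case True
    then obtain m l where ml: "(m, l) \<in> dom_below n k" "M = m + l + e" "L = m - l"
      using dom_below_fold_square_even[OF b[unfolded b_ML] _ e nk] by blast
    have "(LINT z:\<Omega>|lebesgue. fst z ^ e * Q (snd z, fst z ^ 2) * monomial2 b z * w z)
        = (LINT u:(\<lambda>(x, y). (y, x ^ 2)) ` \<Omega>|lebesgue.
            Q u * monomial2 (m, l) u * (snd u ^ e * (w (sqrt (snd u), fst u) / sqrt (snd u))))"
      using set_integral_fold_square_monomial[OF meas symm w_even, of l m e Q] ml
      by (simp add: b_ML dom_below_def)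
    also have "\<dots> = 0"
      using Q ml b_top unfolding is_mdop_def by (auto simp: b_ML)
    finally show ?thesis .
  next
    case False
    define h where "h z = fst z ^ e * Q (snd z, fst z ^ 2) * monomial2 b z * w z" for z
    have h_odd: "h (- x, y) = - h (x, y)" if xy: "(x, y) \<in> \<Omega>" for x y
    proof -
      have "h (- x, y) = ((- x) ^ e * (- x) ^ (M - L)) * (Q (y, x ^ 2) * y ^ L * w (x, y))"
        by (simp add: h_def b_ML monomial2_def w_even[OF xy] mult_ac)
      also have "(- x) ^ e * (- x) ^ (M - L) = - (x ^ e * x ^ (M - L))"
        using False by (simp add: power_add[symmetric] power_minus_odd add.commute)
      also have "- (x ^ e * x ^ (M - L)) * (Q (y, x ^ 2) * y ^ L * w (x, y)) = - h (x, y)"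
        by (simp add: h_def b_ML monomial2_def mult_ac)
      finally show ?thesis .
    qed
    have "(LINT z:\<Omega>|lebesgue. h z) = 0"
      by (rule set_integral_odd_fst_eq_0) (use symm h_odd in auto)
    then show ?thesis by (simp add: h_def)
  qed
qed

theorem proposition3p1:
  fixes \<Omega> :: "(real \<times> real) set"
    and w :: "real \<times> real \<Rightarrow> real"
    and P Q R :: "nat \<Rightarrow> nat \<Rightarrow> real \<times> real \<Rightarrow> real"
  defines "\<Omega>' \<equiv> (\<lambda>(x, y). (y, x ^ 2)) ` \<Omega>"
    and "v \<equiv> (\<lambda>(x, y). w (sqrt y, x))"
  assumes meas: "\<Omega> \<in> sets lebesgue"
    and symm: "\<And>x y. (x, y) \<in> \<Omega> \<Longrightarrow> (- x, y) \<in> \<Omega>"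
    and w_nonneg: "\<And>z. z \<in> \<Omega> \<Longrightarrow> w z \<ge> 0"
    and w_even: "\<And>x y. (x, y) \<in> \<Omega> \<Longrightarrow> w (x, y) = w (- x, y)"
    and mom_w: "finite_moments \<Omega> w"
    and mom_v1: "finite_moments \<Omega>' (\<lambda>(x, y). v (x, y) / sqrt y)"
    and mom_v2: "finite_moments \<Omega>' (\<lambda>(x, y). sqrt y * v (x, y))"
    and P_ex: "\<And>n k. k \<le> n \<Longrightarrow> is_mdop \<Omega> w n k (P n k)"
    and P_uniq: "\<And>n k f. k \<le> n \<Longrightarrow> is_mdop \<Omega> w n k f \<Longrightarrow> f = P n k"
    and Q_ex: "\<And>n k. k \<le> n \<Longrightarrow> is_mdop \<Omega>' (\<lambda>(x, y). v (x, y) / sqrt y) n k (Q n k)"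
    and Q_uniq: "\<And>n k f. k \<le> n \<Longrightarrow> is_mdop \<Omega>' (\<lambda>(x, y). v (x, y) / sqrt y) n k f
                   \<Longrightarrow> f = Q n k"
    and R_ex: "\<And>n k. k \<le> n \<Longrightarrow> is_mdop \<Omega>' (\<lambda>(x, y). sqrt y * v (x, y)) n k (R n k)"
    and R_uniq: "\<And>n k f. k \<le> n \<Longrightarrow> is_mdop \<Omega>' (\<lambda>(x, y). sqrt y * v (x, y)) n k f
                   \<Longrightarrow> f = R n k"
    and nk: "k \<le> n"
  shows "(\<forall>x y. Q n k (y, x ^ 2) = P (n + k) (n - k) (x, y)) \<and>
         (\<forall>x y. x * R n k (y, x ^ 2) = P (n + k + 1) (n - k) (x, y))"
proof -
  have Q_fold: "is_mdop \<Omega>' (\<lambda>u. snd u ^ 0 * (w (sqrt (snd u), fst u) / sqrt (snd u))) n k (Q n k)"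
    using Q_ex[OF nk] by (rule is_mdop_cong_weight) (auto simp: v_def)
  have R_fold: "is_mdop \<Omega>' (\<lambda>u. snd u ^ 1 * (w (sqrt (snd u), fst u) / sqrt (snd u))) n k (R n k)"
    using R_ex[OF nk]
  proof (rule is_mdop_cong_weight)
    fix u assume "u \<in> \<Omega>'"
    then have "0 \<le> snd u" by (auto simp: \<Omega>'_def)
    then show "(\<lambda>(x, y). sqrt y * v (x, y)) u = snd u ^ 1 * (w (sqrt (snd u), fst u) / sqrt (snd u))"
      by (simp add: v_def case_prod_beta real_div_sqrt flip: times_divide_eq_left)
  qed
  have "is_mdop \<Omega> w (n + k + 0) (n - k) (\<lambda>z. fst z ^ 0 * Q n k (snd z, fst z ^ 2))"
    by (rule is_mdop_fold_square) (fact meas symm w_even nk le0 Q_fold[unfolded \<Omega>'_def])+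
  then have Q_eq: "(\<lambda>z. Q n k (snd z, fst z ^ 2)) = P (n + k) (n - k)"
    using P_uniq[of "n - k" "n + k"] by simp
  have "is_mdop \<Omega> w (n + k + 1) (n - k) (\<lambda>z. fst z ^ 1 * R n k (snd z, fst z ^ 2))"
    by (rule is_mdop_fold_square) (fact meas symm w_even nk le_refl R_fold[unfolded \<Omega>'_def])+
  then have R_eq: "(\<lambda>z. fst z * R n k (snd z, fst z ^ 2)) = P (n + k + 1) (n - k)"
    using P_uniq[of "n - k" "n + k + 1"] by simp
  show ?thesis
  proof (intro conjI allI)
    fix x y :: real
    show "Q n k (y, x ^ 2) = P (n + k) (n - k) (x, y)"
      using fun_cong[OF Q_eq, of "(x, y)"] by simp
    show "x * R n k (y, x ^ 2) = P (n + k + 1) (n - k) (x, y)"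
      using fun_cong[OF R_eq, of "(x, y)"] by simp
  qed
qed

end
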